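(* Let $\mathcal I=\{x_0,x_1,x_2,\ldots\}$ be the standard infinite generating set of Thompson's group $F$ and let $T_1,T_2$ be finite rooted binary trees each with $n$ nodes. Then $d_{RA}(T_1,T_2)=|(T_1,T_2)|_{\mathcal I}$, where $|(T_1,T_2)|_{\mathcal I}$ is the word length, with respect to $\mathcal I$, of the element of $F$ represented by the tree pair diagram $(T_1,T_2)$.
   Context: Trees: finite rooted binary trees, each internal vertex (node) having a left and a right child; a tree with $n$ nodes has $n+1$ leaves numbered $0,\ldots,n$ from left to right. The right arm consists of the root and all nodes reachable from it by right edges only. Right rotation at a node $N$ whose left child $M$ is a node (with $A,B$ the subtrees of $M$, $C$ the right subtree of $N$) replaces the subtree at $N$ by one whose root has left subtree $A$ and right child a node with subtrees $B,C$; left rotation is the inverse. The right-arm rotation distance $d_{RA}(T_1,T_2)$ is the minimal number of rotations, each performed at a node on the right arm, needed to transform $T_1$ into $T_2$. Thompson's group $F=\langle x_0,x_1,\ldots\mid x_i^{-1}x_nx_i=x_{n+1}\ (i<n)\rangle$. The leaf exponent of leaf $k$ in a tree is the length of the longest upward path of left edges from leaf $k$ none of whose vertices lies on the right arm. The tree pair diagram $(T_1,T_2)$ represents the element of $F$ given by the word $x_0^{f_0}\cdots x_n^{f_n}x_n^{-e_n}\cdots x_0^{-e_0}$, where $e_i$, $f_i$ are the leaf exponents of leaf $i$ in $T_1$, $T_2$. Word length with respect to a generating set is the length of a shortest word in the generators and their inverses representing the element. *)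

theory Defs
  imports Main
begin

datatype tree = Leaf | Node tree tree

fun nodes :: "tree \<Rightarrow> nat" where
  "nodes Leaf = 0"
| "nodes (Node l r) = Suc (nodes l + nodes r)"

inductive ra_step :: "tree \<Rightarrow> tree \<Rightarrow> bool" where
  rot_right: "ra_step (Node (Node A B) C) (Node A (Node B C))"
| rot_left:  "ra_step (Node A (Node B C)) (Node (Node A B) C)"
| down_right: "ra_step t t' \<Longrightarrow> ra_step (Node L t) (Node L t')"

definition d_RA :: "tree \<Rightarrow> tree \<Rightarrow> nat" where
  "d_RA T1 T2 = (LEAST m. (ra_step ^^ m) T1 T2)"

text \<open>For a subtree, the list (leaves left to right) of lengths of the maximal
  upward paths of left edges from each leaf that stay inside the subtree.\<close>
fun left_paths :: "tree \<Rightarrow> nat list" where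
  "left_paths Leaf = [0]"
| "left_paths (Node l r) =
     (let ps = left_paths l in (Suc (hd ps)) # tl ps) @ left_paths r"

text \<open>Leaf exponents of a whole tree: paths may not contain a vertex of the
  right arm, so the left subtrees hanging off the right arm are treated
  separately; the rightmost leaf has exponent 0.\<close>
fun leaf_exps :: "tree \<Rightarrow> nat list" where
  "leaf_exps Leaf = [0]"
| "leaf_exps (Node l r) = left_paths l @ leaf_exps r"

text \<open>Letters: (i, True) is x_i, (i, False) is x_i inverse.\<close>
type_synonym letter = "nat \<times> bool"

definition relator :: "nat \<Rightarrow> nat \<Rightarrow> letter list" where
  "relator i n = [(i, False), (n, True), (i, True), (Suc n, False)]"

text \<open>Two words represent the same element of
  F = < x_0, x_1, ... | x_i^-1 x_n x_i = x_(n+1) (i < n) >.\<close>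
inductive F_eq :: "letter list \<Rightarrow> letter list \<Rightarrow> bool" where
  F_refl: "F_eq w w"
| F_sym: "F_eq u w \<Longrightarrow> F_eq w u"
| F_trans: "F_eq u v \<Longrightarrow> F_eq v w \<Longrightarrow> F_eq u w"
| F_free: "F_eq (u @ [(i, b), (i, \<not> b)] @ v) (u @ v)"
| F_rel: "i < n \<Longrightarrow> F_eq (u @ relator i n @ v) (u @ v)"

definition F_length :: "letter list \<Rightarrow> nat" where
  "F_length w = (LEAST k. \<exists>u. F_eq u w \<and> length u = k)"

definition tp_word :: "tree \<Rightarrow> tree \<Rightarrow> letter list" where
  "tp_word T1 T2 =
     (let e = leaf_exps T1; f = leaf_exps T2; n = nodes T1 in
      concat (map (\<lambda>i. replicate (f ! i) (i, True)) [0..<Suc n]) @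
      concat (map (\<lambda>i. replicate (e ! i) (i, False)) (rev [0..<Suc n])))"

end

theory Submission
  imports Defs "HOL-Library.Stream"
begin

text \<open>Three inequalities give the theorem.
  A right rotation at the k-th node of the right arm turns a tree T into T' with
  positive word x_0^e_0 ... x_n^e_n of T equal to x_k times that of T'; so a path of m
  right-arm rotations from T1 to T2 yields a word of length m for the element.
  Every right-arm rotation adds or removes exactly one node off the right arm, and while
  two trees differ one of them has an off-arm node missing from the other that a single
  rotation removes; so d_RA is at most the number of off-arm nodes not shared by the two trees.
  Conversely, that number is at most the length of any word w for the element, by induction
  on w: adding a caret at the same leaf of both trees changes neither the element nor the
  number, and after enough such additions the first letter of w is realised by one rotation
  of the second tree. For the empty word, a diagram representing the identity has equal
  trees, because F acts faithfully on infinite binary sequences and the positive word of a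
  tree sends the address of each leaf to that of the corresponding leaf of the right vine.\<close>

definition letter_inv :: "letter \<Rightarrow> letter" where
  "letter_inv l = (fst l, \<not> snd l)"

definition word_inv :: "letter list \<Rightarrow> letter list" where
  "word_inv u = rev (map letter_inv u)"

lemma letter_inv_letter_inv [simp]: "letter_inv (letter_inv l) = l"
  by (simp add: letter_inv_def)

lemma word_inv_simps [simp]:
  "word_inv [] = []"
  "word_inv (l # u) = word_inv u @ [letter_inv l]"
  "word_inv (u @ v) = word_inv v @ word_inv u"
  "word_inv (word_inv u) = u"
  by (simp_all add: word_inv_def rev_map comp_def)

lemma word_inv_replicate: "word_inv (replicate a (i, True)) = replicate a (i, False)"
  by (simp add: word_inv_def letter_inv_def)

lemma word_inv_concat: "word_inv (concat us) = concat (map word_inv (rev us))"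
  by (induction us) auto

lemmas [trans] = F_eq.F_trans

lemma F_eq_context: "F_eq u v \<Longrightarrow> F_eq (p @ u @ s) (p @ v @ s)"
proof (induction rule: F_eq.induct)
  case (F_refl w)
  show ?case by (rule F_eq.F_refl)
next
  case (F_sym u w)
  then show ?case by (blast intro: F_eq.F_sym)
next
  case (F_trans u v w)
  then show ?case by (blast intro: F_eq.F_trans)
next
  case (F_free u i b v)
  show ?case using F_eq.F_free[of "p @ u" i b "v @ s"] by simp
next
  case (F_rel i n u v)
  show ?case using F_eq.F_rel[OF F_rel, of "p @ u" "v @ s"] by simp
qed

lemma F_eq_append: "F_eq u u' \<Longrightarrow> F_eq v v' \<Longrightarrow> F_eq (u @ v) (u' @ v')"
  using F_eq_context[of u u' "[]" v] F_eq_context[of v v' u' "[]"] by (auto intro: F_eq.F_trans)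

lemma F_eq_append_left: "F_eq v v' \<Longrightarrow> F_eq (u @ v) (u @ v')"
  by (rule F_eq_append[OF F_eq.F_refl])

lemma F_eq_append_right: "F_eq u u' \<Longrightarrow> F_eq (u @ v) (u' @ v)"
  by (rule F_eq_append[OF _ F_eq.F_refl])

lemma F_eq_Cons: "F_eq v v' \<Longrightarrow> F_eq (l # v) (l # v')"
  using F_eq_append_left[of v v' "[l]"] by simp

lemma F_eq_cancel: "F_eq (l # letter_inv l # v) v"
  using F_eq.F_free[of "[]" "fst l" "snd l" v] by (simp add: letter_inv_def)

lemma F_eq_cancel': "F_eq (letter_inv l # l # v) v"
  using F_eq_cancel[of "letter_inv l" v] by simp

lemma F_eq_Cons_cancel: "F_eq (l # u) (l # v) \<Longrightarrow> F_eq u v"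
  using F_eq.F_trans[OF F_eq.F_sym[OF F_eq_cancel'] F_eq.F_trans[OF F_eq_Cons F_eq_cancel']] .

lemma F_eq_move_Cons: "F_eq u (l # v) \<Longrightarrow> F_eq (letter_inv l # u) v"
  using F_eq_Cons[of u "l # v" "letter_inv l"] F_eq_cancel'[of l v] by (rule F_eq.F_trans)

lemma F_eq_word_inv_right: "F_eq (u @ word_inv u) []"
proof (induction u)
  case Nil
  then show ?case by (simp add: F_eq.F_refl)
next
  case (Cons l u)
  have "F_eq ((l # u) @ word_inv (l # u)) ([l] @ [] @ [letter_inv l])"
    using F_eq_context[OF Cons.IH, of "[l]" "[letter_inv l]"] by simp
  also have "F_eq ([l] @ [] @ [letter_inv l]) []"
    using F_eq_cancel[of l "[]"] by simp
  finally show ?case .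
qed

lemma F_eq_word_inv_left: "F_eq (word_inv u @ u) []"
  using F_eq_word_inv_right[of "word_inv u"] by simp

lemma F_eq_word_inv: "F_eq u v \<Longrightarrow> F_eq (word_inv u) (word_inv v)"
proof -
  assume uv: "F_eq u v"
  have "F_eq (word_inv u) (word_inv u @ v @ word_inv v)"
    using F_eq_append_left[OF F_eq.F_sym[OF F_eq_word_inv_right], of "word_inv u"] by simp
  also have "F_eq \<dots> (word_inv u @ u @ word_inv v)"
    by (intro F_eq_append_left F_eq_append_right F_eq.F_sym[OF uv])
  also have "F_eq \<dots> (word_inv v)"
    using F_eq_append_right[OF F_eq_word_inv_left[of u], of "word_inv v"] by simp
  finally show ?thesis .
qed

lemma F_eq_swap_gens: "i < c \<Longrightarrow> F_eq [(c, True), (i, True)] [(i, True), (Suc c, True)]"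
proof -
  assume "i < c"
  have "F_eq [(c, True), (i, True)] ([(c, True), (i, True)] @ [(Suc c, False), (Suc c, True)])"
    using F_eq.F_sym[OF F_eq.F_free[of "[(c, True), (i, True)]" "Suc c" False "[]"]] by simp
  also have "F_eq \<dots> ([(i, True)] @ relator i c @ [(Suc c, True)])"
    using F_eq.F_sym[OF F_eq.F_free[of "[]" i True "[(c, True), (i, True), (Suc c, False), (Suc c, True)]"]]
    by (simp add: relator_def)
  also have "F_eq \<dots> [(i, True), (Suc c, True)]"
    using F_eq.F_rel[OF \<open>i < c\<close>, of "[(i, True)]" "[(Suc c, True)]"] by simp
  finally show ?thesis .
qed

definition shift_word :: "nat \<Rightarrow> letter list \<Rightarrow> letter list" where
  "shift_word k = map (\<lambda>(i, b). (i + k, b))"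

lemma F_eq_shift_word: "F_eq u v \<Longrightarrow> F_eq (shift_word k u) (shift_word k v)"
proof (induction rule: F_eq.induct)
  case (F_refl w)
  show ?case by (rule F_eq.F_refl)
next
  case (F_sym u w)
  then show ?case by (blast intro: F_eq.F_sym)
next
  case (F_trans u v w)
  then show ?case by (blast intro: F_eq.F_trans)
next
  case (F_free u i b v)
  show ?case using F_eq.F_free[of "shift_word k u" "i + k" b "shift_word k v"]
    by (simp add: shift_word_def)
next
  case (F_rel i n u v)
  then have "i + k < n + k" by simp
  then show ?case using F_eq.F_rel[of "i + k" "n + k" "shift_word k u" "shift_word k v"]
    by (simp add: shift_word_def relator_def)
qed

fun leaves :: "tree \<Rightarrow> nat" where
  "leaves Leaf = 1"
| "leaves (Node l r) = leaves l + leaves r"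

lemma leaves_eq_Suc_nodes: "leaves t = Suc (nodes t)"
  by (induction t) auto

lemma leaves_pos: "0 < leaves t"
  by (simp add: leaves_eq_Suc_nodes)

lemma length_sum_left_paths:
  "length (left_paths t) = Suc (nodes t) \<and> sum_list (left_paths t) = nodes t"
proof (induction t)
  case Leaf
  then show ?case by simp
next
  case (Node l r)
  then obtain h hs where "left_paths l = h # hs" by (cases "left_paths l") auto
  with Node show ?case by (simp add: Let_def)
qed

lemmas length_left_paths [simp] = length_sum_left_paths[THEN conjunct1]
lemmas sum_list_left_paths [simp] = length_sum_left_paths[THEN conjunct2]

lemma left_paths_Cons:
  obtains h hs where "left_paths t = h # hs" and "length hs = nodes t" and "h + sum_list hs = nodes t"
  using length_left_paths[of t] sum_list_left_paths[of t] by (cases "left_paths t") auto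

lemma length_leaf_exps: "length (leaf_exps t) = Suc (nodes t)"
  by (induction t) auto

fun exps_word :: "nat \<Rightarrow> nat list \<Rightarrow> letter list" where
  "exps_word k [] = []"
| "exps_word k (a # e) = replicate a (k, True) @ exps_word (Suc k) e"

definition tree_word :: "tree \<Rightarrow> letter list" where
  "tree_word T = exps_word 0 (leaf_exps T)"

abbreviation pair_word :: "tree \<Rightarrow> tree \<Rightarrow> letter list" where
  "pair_word A B \<equiv> tree_word B @ word_inv (tree_word A)"

lemma exps_word_append: "exps_word k (e @ e') = exps_word k e @ exps_word (k + length e) e'"
  by (induction e arbitrary: k) auto

lemma exps_word_shift: "exps_word (j + k) e = shift_word k (exps_word j e)"
proof (induction e arbitrary: j)
  case Nil
  then show ?case by (simp add: shift_word_def)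
next
  case (Cons a e)
  show ?case using Cons.IH[of "Suc j"] by (simp add: shift_word_def)
qed

lemma exps_word_conv_concat:
  "exps_word k e = concat (map (\<lambda>j. replicate (e ! j) (k + j, True)) [0..<length e])"
proof (induction e arbitrary: k)
  case Nil
  then show ?case by simp
next
  case (Cons a e)
  have "[0..<length (a # e)] = 0 # map Suc [0..<length e]"
    by (simp add: map_Suc_upt upt_conv_Cons del: upt_Suc)
  with Cons show ?case by (simp add: comp_def)
qed

lemma tp_word_eq_pair_word: "nodes T1 = nodes T2 \<Longrightarrow> tp_word T1 T2 = pair_word T1 T2"
  by (simp add: tp_word_def Let_def tree_word_def exps_word_conv_concat length_leaf_exps
      word_inv_concat word_inv_replicate rev_map comp_def del: upt_Suc)

section \<open>Rotations multiply the positive word by a generator\<close>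

text \<open>The side conditions j < c of the relations used to move x_c to the right through
  exps_word k e, its index growing by one at each letter passed.\<close>

fun pushable :: "nat \<Rightarrow> nat \<Rightarrow> nat list \<Rightarrow> bool" where
  "pushable c k [] = True"
| "pushable c k (a # e) = ((0 < a \<longrightarrow> k < c) \<and> pushable (c + a) (Suc k) e)"

lemma pushable_append:
  "pushable c k (e @ e') \<longleftrightarrow> pushable c k e \<and> pushable (c + sum_list e) (k + length e) e'"
  by (induction e arbitrary: c k) (auto simp: add.assoc)

lemma pushable_left_paths: "k < c \<Longrightarrow> pushable c k (left_paths t)"
proof (induction t arbitrary: c k)
  case Leaf
  then show ?case by simp
next
  case (Node l r)
  obtain h hs where h: "left_paths l = h # hs" "length hs = nodes l" "h + sum_list hs = nodes l"
    by (rule left_paths_Cons)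
  have "pushable (Suc c) k (h # hs)"
    using Node.IH(1)[of k "Suc c"] Node.prems h by simp
  moreover have "pushable (c + Suc h + sum_list hs) (Suc k + length hs) (left_paths r)"
    using Node.IH(2) Node.prems h by simp
  ultimately show ?case using Node.prems h by (simp add: pushable_append Let_def)
qed

lemma F_eq_push_replicate:
  "k < c \<Longrightarrow> F_eq ((c, True) # replicate a (k, True)) (replicate a (k, True) @ [(c + a, True)])"
proof (induction a arbitrary: c)
  case 0
  then show ?case by (simp add: F_eq.F_refl)
next
  case (Suc a)
  have "F_eq ((c, True) # replicate (Suc a) (k, True))
      ((k, True) # (Suc c, True) # replicate a (k, True))"
    using F_eq_append_right[OF F_eq_swap_gens[OF Suc.prems], of "replicate a (k, True)"] by simp
  also have "F_eq \<dots> ((k, True) # replicate a (k, True) @ [(Suc c + a, True)])"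
    using F_eq_Cons[OF Suc.IH[of "Suc c"]] Suc.prems by simp
  finally show ?case by simp
qed

lemma F_eq_push_exps_word:
  "pushable c k e \<Longrightarrow> F_eq ((c, True) # exps_word k e) (exps_word k e @ [(c + sum_list e, True)])"
proof (induction e arbitrary: c k)
  case Nil
  then show ?case by (simp add: F_eq.F_refl)
next
  case (Cons a e)
  have "F_eq ((c, True) # replicate a (k, True)) (replicate a (k, True) @ [(c + a, True)])"
    using Cons.prems by (cases "a = 0") (simp_all add: F_eq.F_refl F_eq_push_replicate)
  then have "F_eq ((c, True) # exps_word k (a # e))
      (replicate a (k, True) @ (c + a, True) # exps_word (Suc k) e)"
    using F_eq_append_right by fastforce
  also have "F_eq \<dots> (replicate a (k, True) @ exps_word (Suc k) e @ [(c + a + sum_list e, True)])"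
    using F_eq_append_left[OF Cons.IH] Cons.prems by simp
  finally show ?case by (simp add: add.assoc)
qed

lemma F_eq_pull_replicate:
  "i < k \<Longrightarrow> F_eq (replicate a (k, True) @ [(i, True)]) ((i, True) # replicate a (Suc k, True))"
proof (induction a)
  case 0
  then show ?case by (simp add: F_eq.F_refl)
next
  case (Suc a)
  have "F_eq (replicate (Suc a) (k, True) @ [(i, True)])
      ((k, True) # (i, True) # replicate a (Suc k, True))"
    using F_eq_Cons[OF Suc.IH[OF Suc.prems]] by simp
  also have "F_eq \<dots> ((i, True) # (Suc k, True) # replicate a (Suc k, True))"
    using F_eq_append_right[OF F_eq_swap_gens[OF Suc.prems], of "replicate a (Suc k, True)"] by simp
  finally show ?case by simp
qed

lemma F_eq_pull_exps_word:
  "i < k \<Longrightarrow> F_eq (exps_word k e @ [(i, True)]) ((i, True) # exps_word (Suc k) e)"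
proof (induction e arbitrary: k)
  case Nil
  then show ?case by (simp add: F_eq.F_refl)
next
  case (Cons a e)
  have "F_eq (exps_word k (a # e) @ [(i, True)])
      (replicate a (k, True) @ (i, True) # exps_word (Suc (Suc k)) e)"
    using F_eq_append_left[OF Cons.IH] Cons.prems by simp
  also have "F_eq \<dots> ((i, True) # replicate a (Suc k, True) @ exps_word (Suc (Suc k)) e)"
    using F_eq_append_right[OF F_eq_pull_replicate[OF Cons.prems]] by fastforce
  finally show ?case by simp
qed

inductive rrot :: "nat \<Rightarrow> tree \<Rightarrow> tree \<Rightarrow> bool" where
  rrot_root: "rrot 0 (Node (Node A B) C) (Node A (Node B C))"
| rrot_right: "rrot k t t' \<Longrightarrow> rrot (Suc k) (Node L t) (Node L t')"

lemma nodes_rrot: "rrot k T T' \<Longrightarrow> nodes T' = nodes T"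
  by (induction rule: rrot.induct) auto

lemma leaves_rrot: "rrot k T T' \<Longrightarrow> leaves T' = leaves T"
  by (simp add: leaves_eq_Suc_nodes nodes_rrot)

lemma ra_step_iff_rrot: "ra_step T T' \<longleftrightarrow> (\<exists>k. rrot k T T') \<or> (\<exists>k. rrot k T' T)"
proof
  show "ra_step T T' \<Longrightarrow> (\<exists>k. rrot k T T') \<or> (\<exists>k. rrot k T' T)"
    by (induction rule: ra_step.induct) (auto intro: rrot.intros)
  have "rrot k T T' \<Longrightarrow> ra_step T T' \<and> ra_step T' T" for k T T'
    by (induction rule: rrot.induct) (auto intro: ra_step.intros)
  then show "(\<exists>k. rrot k T T') \<or> (\<exists>k. rrot k T' T) \<Longrightarrow> ra_step T T'"
    by blast
qed

lemma tree_word_rrot: "rrot k T T' \<Longrightarrow> F_eq (tree_word T) ((k, True) # tree_word T')"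
proof (induction rule: rrot.induct)
  case (rrot_root A B C)
  obtain h hs where "left_paths A = h # hs" by (rule left_paths_Cons)
  then show ?case by (simp add: tree_word_def Let_def exps_word_append F_eq.F_refl)
next
  case (rrot_right k t t' L)
  let ?m = "length (left_paths L)"
  have "F_eq (exps_word ?m (leaf_exps t)) ((k + ?m, True) # exps_word ?m (leaf_exps t'))"
    using F_eq_shift_word[OF rrot_right.IH, of ?m] exps_word_shift[of 0 ?m]
    by (simp add: tree_word_def shift_word_def)
  then have "F_eq (tree_word (Node L t))
      (exps_word 0 (left_paths L) @ (k + ?m, True) # exps_word ?m (leaf_exps t'))"
    using F_eq_append_left by (fastforce simp: tree_word_def exps_word_append)
  also have "F_eq \<dots> ((Suc k, True) # tree_word (Node L t'))"
  proof -
    have "F_eq ((Suc k, True) # exps_word 0 (left_paths L))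
        (exps_word 0 (left_paths L) @ [(k + ?m, True)])"
      using F_eq_push_exps_word[OF pushable_left_paths, of 0 "Suc k" L] by simp
    from F_eq.F_sym[OF F_eq_append_right[OF this]] show ?thesis
      by (simp add: tree_word_def exps_word_append)
  qed
  finally show ?case .
qed

lemma ra_path_word:
  "(ra_step ^^ m) A B \<Longrightarrow> \<exists>u. length u = m \<and> F_eq u (pair_word A B)"
proof (induction m arbitrary: B)
  case 0
  then show ?case using F_eq.F_sym[OF F_eq_word_inv_right[of "tree_word A"]] by auto
next
  case (Suc m)
  then obtain C where C: "(ra_step ^^ m) A C" "ra_step C B" by auto
  from Suc.IH[OF C(1)] obtain u where u: "length u = m" "F_eq u (pair_word A C)" by blast
  obtain l where "F_eq (pair_word A C) (l # pair_word A B)"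
  proof -
    from C(2) consider k where "rrot k C B" | k where "rrot k B C"
      by (auto simp: ra_step_iff_rrot)
    then show ?thesis
    proof cases
      case 1
      then show ?thesis using that F_eq_append_right[OF tree_word_rrot] by fastforce
    next
      case 2
      then show ?thesis
        using that F_eq_append_right[OF F_eq.F_sym[OF F_eq_move_Cons[OF tree_word_rrot]]]
        by fastforce
    qed
  qed
  then have "F_eq (letter_inv l # u) (pair_word A B)"
    using F_eq_move_Cons[OF F_eq.F_trans[OF u(2)]] by blast
  with u(1) show ?case by (intro exI[of _ "letter_inv l # u"]) simp
qed

section \<open>Nodes off the right arm\<close>

definition shift_sub :: "nat \<Rightarrow> nat \<times> tree \<Rightarrow> nat \<times> tree" where
  "shift_sub k x = (fst x + k, snd x)"

lemma shift_sub_simp [simp]: "shift_sub k (a, t) = (a + k, t)"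
  by (simp add: shift_sub_def)

lemma shift_sub_0 [simp]: "shift_sub 0 = id"
  by (simp add: shift_sub_def fun_eq_iff)

lemma inj_shift_sub: "inj (shift_sub k)"
  by (auto simp: inj_def shift_sub_def prod_eq_iff)

lemma mem_shift_sub_image: "(a, t) \<in> shift_sub k ` X \<longleftrightarrow> k \<le> a \<and> (a - k, t) \<in> X"
  by (force simp: image_iff shift_sub_def)

lemma shift_sub_image_image: "shift_sub k ` shift_sub j ` X = shift_sub (j + k) ` X"
  by (force simp: image_image shift_sub_def add.assoc)

text \<open>A node is recorded as the subtree it spans together with the index of its leftmost
  leaf; this pair determines the node.\<close>

fun subtrees :: "tree \<Rightarrow> (nat \<times> tree) set" where
  "subtrees Leaf = {}"
| "subtrees (Node l r) = insert (0, Node l r) (subtrees l \<union> shift_sub (leaves l) ` subtrees r)"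

fun off_arm_nodes :: "tree \<Rightarrow> (nat \<times> tree) set" where
  "off_arm_nodes Leaf = {}"
| "off_arm_nodes (Node L R) = subtrees L \<union> shift_sub (leaves L) ` off_arm_nodes R"

definition off_arm_dist :: "tree \<Rightarrow> tree \<Rightarrow> nat" where
  "off_arm_dist A B =
     card (off_arm_nodes A - off_arm_nodes B) + card (off_arm_nodes B - off_arm_nodes A)"

lemma finite_subtrees [simp]: "finite (subtrees t)"
  by (induction t) auto

lemma finite_off_arm_nodes [simp]: "finite (off_arm_nodes t)"
  by (induction t) auto

lemma off_arm_dist_sym: "off_arm_dist A B = off_arm_dist B A"
  by (simp add: off_arm_dist_def)

lemma subtrees_not_Leaf: "(a, t) \<in> subtrees s \<Longrightarrow> t \<noteq> Leaf"
  by (induction s arbitrary: a) (auto simp: mem_shift_sub_image)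

lemma off_arm_nodes_not_Leaf: "(a, t) \<in> off_arm_nodes T \<Longrightarrow> t \<noteq> Leaf"
  by (induction T arbitrary: a) (auto simp: mem_shift_sub_image dest: subtrees_not_Leaf)

lemma subtrees_leaves_le: "(a, t) \<in> subtrees s \<Longrightarrow> a + leaves t \<le> leaves s"
  by (induction s arbitrary: a) (fastforce simp: mem_shift_sub_image)+

lemma subtrees_eq_or_smaller: "(a, t) \<in> subtrees s \<Longrightarrow> t = s \<or> nodes t < nodes s"
  by (induction s arbitrary: a) (fastforce simp: mem_shift_sub_image)+

lemma subtrees_self: "t \<noteq> Leaf \<Longrightarrow> (0, t) \<in> subtrees t"
  by (cases t) auto

lemma subtrees_trans: "(k, s) \<in> subtrees t \<Longrightarrow> shift_sub k ` subtrees s \<subseteq> subtrees t"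
proof (induction t arbitrary: k)
  case Leaf
  then show ?case by simp
next
  case (Node l r)
  consider "(k, s) = (0, Node l r)" | "(k, s) \<in> subtrees l"
    | "leaves l \<le> k" "(k - leaves l, s) \<in> subtrees r"
    using Node.prems by (auto simp: mem_shift_sub_image)
  then show ?case
  proof cases
    case 3
    then have "shift_sub (leaves l) ` shift_sub (k - leaves l) ` subtrees s
        \<subseteq> shift_sub (leaves l) ` subtrees r"
      using Node.IH(2) by (intro image_mono) auto
    with 3 show ?thesis by (auto simp: shift_sub_image_image)
  qed (use Node.IH(1) in auto)
qed

lemma off_arm_nodes_subtrees_closed:
  "(k, s) \<in> off_arm_nodes T \<Longrightarrow> shift_sub k ` subtrees s \<subseteq> off_arm_nodes T"
proof (induction T arbitrary: k)
  case Leaf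
  then show ?case by simp
next
  case (Node L R)
  show ?case
  proof (cases "(k, s) \<in> subtrees L")
    case True
    then show ?thesis using subtrees_trans by fastforce
  next
    case False
    then have k: "leaves L \<le> k" "(k - leaves L, s) \<in> off_arm_nodes R"
      using Node.prems by (auto simp: mem_shift_sub_image)
    then have "shift_sub (leaves L) ` shift_sub (k - leaves L) ` subtrees s
        \<subseteq> shift_sub (leaves L) ` off_arm_nodes R"
      using Node.IH by (intro image_mono) auto
    with k show ?thesis by (auto simp: shift_sub_image_image)
  qed
qed

lemma subtrees_disjoint_shift: "subtrees L \<inter> shift_sub (leaves L) ` X = {}"
proof -
  have "(a, t) \<notin> shift_sub (leaves L) ` X" if "(a, t) \<in> subtrees L" for a t
    using subtrees_leaves_le[OF that] leaves_pos[of t] by (simp add: mem_shift_sub_image)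
  then show ?thesis by auto
qed

lemma off_arm_nodes_Node_0: "(0, t) \<in> off_arm_nodes (Node L R) \<longleftrightarrow> (0, t) \<in> subtrees L"
  using leaves_pos[of L] by (auto simp: mem_shift_sub_image)

lemma off_arm_nodes_inj:
  "nodes A = nodes B \<Longrightarrow> off_arm_nodes A = off_arm_nodes B \<Longrightarrow> A = B"
proof (induction A arbitrary: B)
  case Leaf
  then show ?case by (cases B) auto
next
  case (Node L R)
  obtain L' R' where B: "B = Node L' R'"
    using Node.prems by (cases B) auto
  have "off_arm_nodes (Node L R) = off_arm_nodes (Node L' R')"
    using Node.prems(2) B by simp
  then have sym: "(0, t) \<in> subtrees L \<longleftrightarrow> (0, t) \<in> subtrees L'" for t
    using off_arm_nodes_Node_0[of t L R] off_arm_nodes_Node_0[of t L' R'] by simp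
  have "L = L'"
  proof (cases "L = Leaf \<or> L' = Leaf")
    case True
    moreover have "L \<noteq> Leaf" if "L' \<noteq> Leaf"
      using sym[of L'] subtrees_self[OF that] by force
    moreover have "L' \<noteq> Leaf" if "L \<noteq> Leaf"
      using sym[of L] subtrees_self[OF that] by force
    ultimately show ?thesis by blast
  next
    case False
    then have "(0, L) \<in> subtrees L'" "(0, L') \<in> subtrees L"
      using sym subtrees_self by auto
    then show ?thesis
      using subtrees_eq_or_smaller[of 0 L L'] subtrees_eq_or_smaller[of 0 L' L] by auto
  qed
  have "shift_sub (leaves L) ` off_arm_nodes R = off_arm_nodes (Node L R) - subtrees L"
    using subtrees_disjoint_shift[of L "off_arm_nodes R"] by auto
  also have "\<dots> = shift_sub (leaves L) ` off_arm_nodes R'"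
    using Node.prems(2) subtrees_disjoint_shift[of L' "off_arm_nodes R'"] B \<open>L = L'\<close> by auto
  finally have "off_arm_nodes R = off_arm_nodes R'"
    by (simp add: inj_image_eq_iff inj_shift_sub)
  moreover have "nodes R = nodes R'"
    using Node.prems(1) B \<open>L = L'\<close> by simp
  ultimately show ?case using Node.IH(2) B \<open>L = L'\<close> by blast
qed

lemma off_arm_nodes_rrot_root:
  "off_arm_nodes (Node (Node A B) C) = insert (0, Node A B) (off_arm_nodes (Node A (Node B C)))"
  "(0, Node A B) \<notin> off_arm_nodes (Node A (Node B C))"
proof -
  have "leaves B + leaves A = leaves A + leaves B" by simp
  then show "off_arm_nodes (Node (Node A B) C) = insert (0, Node A B) (off_arm_nodes (Node A (Node B C)))"
    by (simp add: Un_assoc image_Un shift_sub_image_image add.commute)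
  show "(0, Node A B) \<notin> off_arm_nodes (Node A (Node B C))"
    unfolding off_arm_nodes_Node_0 using subtrees_eq_or_smaller[of 0 "Node A B" A] by auto
qed

lemma off_arm_nodes_rrot_right:
  assumes "x \<in> off_arm_nodes t" and "off_arm_nodes t' = off_arm_nodes t - {x}"
  shows "shift_sub (leaves L) x \<in> off_arm_nodes (Node L t)"
    and "off_arm_nodes (Node L t') = off_arm_nodes (Node L t) - {shift_sub (leaves L) x}"
proof -
  show "shift_sub (leaves L) x \<in> off_arm_nodes (Node L t)"
    using assms(1) by simp
  have "shift_sub (leaves L) x \<notin> subtrees L"
    using subtrees_disjoint_shift[of L "{x}"] by auto
  moreover have "off_arm_nodes (Node L t') =
      subtrees L \<union> (shift_sub (leaves L) ` off_arm_nodes t - {shift_sub (leaves L) x})"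
    using assms(2) by (simp add: image_set_diff[OF inj_shift_sub])
  ultimately show "off_arm_nodes (Node L t') = off_arm_nodes (Node L t) - {shift_sub (leaves L) x}"
    by auto
qed

lemma off_arm_nodes_rrot:
  "rrot k T T' \<Longrightarrow> \<exists>x \<in> off_arm_nodes T. off_arm_nodes T' = off_arm_nodes T - {x}"
proof (induction rule: rrot.induct)
  case (rrot_root A B C)
  then show ?case using off_arm_nodes_rrot_root[of A B C] by auto
next
  case (rrot_right k t t' L)
  then obtain x where "x \<in> off_arm_nodes t" "off_arm_nodes t' = off_arm_nodes t - {x}"
    by blast
  from off_arm_nodes_rrot_right[OF this] show ?case by blast
qed

lemma exists_rrot_removing:
  "\<not> shift_sub j ` off_arm_nodes A \<subseteq> off_arm_nodes B \<Longrightarrow>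
    \<exists>k A' x. rrot k A A' \<and> x \<in> off_arm_nodes A \<and> shift_sub j x \<notin> off_arm_nodes B
      \<and> off_arm_nodes A' = off_arm_nodes A - {x}"
proof (induction A arbitrary: j)
  case Leaf
  then show ?case by simp
next
  case (Node L R)
  show ?case
  proof (cases "shift_sub j ` subtrees L \<subseteq> off_arm_nodes B")
    case False
    then obtain P Q where L: "L = Node P Q" by (cases L) auto
    have "(j, L) \<notin> off_arm_nodes B"
      using False off_arm_nodes_subtrees_closed by blast
    moreover have "rrot 0 (Node L R) (Node P (Node Q R))"
      unfolding L by (rule rrot_root)
    ultimately show ?thesis
      using off_arm_nodes_rrot_root[of P Q R] L by fastforce
  next
    case True
    then have "\<not> shift_sub (leaves L + j) ` off_arm_nodes R \<subseteq> off_arm_nodes B"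
      using Node.prems by (auto simp: image_Un shift_sub_image_image)
    then obtain k R' x where x: "rrot k R R'" "x \<in> off_arm_nodes R"
      "shift_sub (leaves L + j) x \<notin> off_arm_nodes B" "off_arm_nodes R' = off_arm_nodes R - {x}"
      using Node.IH(2) by blast
    have "shift_sub j (shift_sub (leaves L) x) = shift_sub (leaves L + j) x"
      by (simp add: shift_sub_def add.assoc)
    then show ?thesis
      using rrot_right[OF x(1)] off_arm_nodes_rrot_right[OF x(2) x(4), of L] x(3) by metis
  qed
qed

lemma off_arm_dist_remove:
  assumes "x \<in> off_arm_nodes B" and "off_arm_nodes B' = off_arm_nodes B - {x}"
  shows "if x \<in> off_arm_nodes A then off_arm_dist A B' = Suc (off_arm_dist A B)
         else off_arm_dist A B = Suc (off_arm_dist A B')"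
proof (cases "x \<in> off_arm_nodes A")
  case True
  then have "off_arm_nodes A - off_arm_nodes B' = insert x (off_arm_nodes A - off_arm_nodes B)"
    and "off_arm_nodes B' - off_arm_nodes A = off_arm_nodes B - off_arm_nodes A"
    using assms by auto
  with True assms(1) show ?thesis by (simp add: off_arm_dist_def)
next
  case False
  then have "off_arm_nodes A - off_arm_nodes B' = off_arm_nodes A - off_arm_nodes B"
    and "off_arm_nodes B - off_arm_nodes A = insert x (off_arm_nodes B' - off_arm_nodes A)"
    using assms by auto
  with False assms(2) show ?thesis by (simp add: off_arm_dist_def)
qed

lemma exists_rrot_closer:
  assumes "\<not> off_arm_nodes A \<subseteq> off_arm_nodes B"
  obtains k A' where "rrot k A A'" and "Suc (off_arm_dist A' B) = off_arm_dist A B"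
proof -
  obtain k A' x where "rrot k A A'" "x \<in> off_arm_nodes A" "x \<notin> off_arm_nodes B"
      "off_arm_nodes A' = off_arm_nodes A - {x}"
    using exists_rrot_removing[of 0 A B] assms by (auto simp: shift_sub_def)
  then show ?thesis
    using that off_arm_dist_remove[of x A A' B] by (simp add: off_arm_dist_sym)
qed

lemma ra_path_off_arm_dist:
  "nodes A = nodes B \<Longrightarrow> \<exists>m \<le> off_arm_dist A B. (ra_step ^^ m) A B"
proof (induction "off_arm_dist A B" arbitrary: A B rule: less_induct)
  case less
  consider "\<not> off_arm_nodes A \<subseteq> off_arm_nodes B" | "\<not> off_arm_nodes B \<subseteq> off_arm_nodes A"
    | "off_arm_nodes A = off_arm_nodes B"
    by blast
  then show ?case
  proof cases
    case 1
    then obtain k A' where A': "rrot k A A'" "Suc (off_arm_dist A' B) = off_arm_dist A B"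
      by (rule exists_rrot_closer)
    have "nodes A' = nodes B"
      using nodes_rrot[OF A'(1)] less.prems by simp
    then obtain m where m: "m \<le> off_arm_dist A' B" "(ra_step ^^ m) A' B"
      using less.hyps[of A' B] A'(2) by auto
    have "ra_step A A'"
      using A'(1) ra_step_iff_rrot by blast
    from relpowp_Suc_I2[OF this m(2)] m(1) A'(2) show ?thesis
      by (intro exI[of _ "Suc m"]) simp
  next
    case 2
    then obtain k B' where B': "rrot k B B'" "Suc (off_arm_dist B' A) = off_arm_dist B A"
      by (rule exists_rrot_closer)
    have "nodes A = nodes B'"
      using nodes_rrot[OF B'(1)] less.prems by simp
    then obtain m where m: "m \<le> off_arm_dist A B'" "(ra_step ^^ m) A B'"
      using less.hyps[of A B'] B'(2) off_arm_dist_sym by auto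
    have "ra_step B' B"
      using B'(1) ra_step_iff_rrot by blast
    from relpowp_Suc_I[OF m(2) this] m(1) B'(2) show ?thesis
      by (intro exI[of _ "Suc m"]) (simp add: off_arm_dist_sym)
  next
    case 3
    then show ?thesis using off_arm_nodes_inj[OF less.prems] by auto
  qed
qed

section \<open>Adding a caret at the same leaf of both trees\<close>

fun add_caret :: "nat \<Rightarrow> tree \<Rightarrow> tree" where
  "add_caret i Leaf = (if i = 0 then Node Leaf Leaf else Leaf)"
| "add_caret i (Node l r) =
     (if i < leaves l then Node (add_caret i l) r else Node l (add_caret (i - leaves l) r))"

fun remove_caret :: "nat \<Rightarrow> tree \<Rightarrow> tree" where
  "remove_caret i Leaf = Leaf"
| "remove_caret i (Node l r) =
     (if i = 0 \<and> l = Leaf \<and> r = Leaf then Leaf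
      else if i < leaves l then Node (remove_caret i l) r
      else Node l (remove_caret (i - leaves l) r))"

lemma nodes_add_caret: "i < leaves t \<Longrightarrow> nodes (add_caret i t) = Suc (nodes t)"
  by (induction i t rule: add_caret.induct) (auto simp: leaves_eq_Suc_nodes)

lemma leaves_add_caret: "i < leaves t \<Longrightarrow> leaves (add_caret i t) = Suc (leaves t)"
  by (simp add: leaves_eq_Suc_nodes nodes_add_caret)

lemma add_caret_not_Leaf: "i < leaves t \<Longrightarrow> add_caret i t \<noteq> Leaf"
  by (induction i t rule: add_caret.induct) auto

lemma remove_add_caret: "i < leaves t \<Longrightarrow> remove_caret i (add_caret i t) = t"
proof (induction i t rule: add_caret.induct)
  case (1 i)
  then show ?case by simp
next
  case (2 i l r)
  show ?case
  proof (cases "i < leaves l")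
    case True
    then show ?thesis using 2 add_caret_not_Leaf[OF True] leaves_add_caret[OF True] by simp
  next
    case False
    then have "i - leaves l < leaves r" using 2(3) by simp
    then show ?thesis using 2 False add_caret_not_Leaf[of "i - leaves l" r] leaves_pos[of l] by auto
  qed
qed

lemma left_paths_add_caret:
  "i < leaves t \<Longrightarrow> left_paths (add_caret i t) =
     take i (left_paths t) @ Suc (left_paths t ! i) # 0 # drop (Suc i) (left_paths t)"
proof (induction i t rule: add_caret.induct)
  case (1 i)
  then show ?case by simp
next
  case (2 i l r)
  obtain h hs where h: "left_paths l = h # hs" "length hs = nodes l"
    by (rule left_paths_Cons)
  have leaves_l: "leaves l = Suc (length hs)"
    using h(2) leaves_eq_Suc_nodes[of l] by simp
  show ?case
  proof (cases "i < leaves l")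
    case True
    then have IH: "left_paths (add_caret i l) =
        take i (h # hs) @ Suc ((h # hs) ! i) # 0 # drop (Suc i) (h # hs)"
      using 2(1) h by simp
    show ?thesis
    proof (cases i)
      case 0
      then show ?thesis using True IH h by (simp add: Let_def)
    next
      case (Suc j)
      then have "j < length hs" using True leaves_l by simp
      then show ?thesis using True IH h Suc by (simp add: Let_def nth_append)
    qed
  next
    case False
    then obtain j where j: "i = Suc (length hs) + j" using leaves_l by (metis le_add_diff_inverse not_less)
    have "left_paths (add_caret j r) =
        take j (left_paths r) @ Suc (left_paths r ! j) # 0 # drop (Suc j) (left_paths r)"
      using 2(2) False 2(3) j leaves_l by simp
    then show ?thesis using False h leaves_l j by (simp add: Let_def nth_append)
  qed
qed

lemma leaf_exps_add_caret:
  "i < nodes T \<Longrightarrow> leaf_exps (add_caret i T) =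
     take i (leaf_exps T) @ Suc (leaf_exps T ! i) # 0 # drop (Suc i) (leaf_exps T)"
proof (induction T arbitrary: i)
  case Leaf
  then show ?case by simp
next
  case (Node L R)
  have leaves_L: "leaves L = length (left_paths L)"
    by (simp add: leaves_eq_Suc_nodes)
  show ?case
  proof (cases "i < leaves L")
    case True
    then show ?thesis using left_paths_add_caret[OF True] leaves_L by (auto simp: nth_append)
  next
    case False
    then have "i - leaves L < nodes R" "Suc (i - leaves L) = Suc i - leaves L"
      using Node.prems leaves_eq_Suc_nodes[of L] by auto
    then show ?thesis using Node.IH(2) False leaves_L by (auto simp: nth_append)
  qed
qed

lemma leaf_exps_add_caret_last: "leaf_exps (add_caret (nodes T) T) = leaf_exps T @ [0]"
  by (induction T) (auto simp: leaves_eq_Suc_nodes)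

lemma F_eq_exps_word_add_caret:
  assumes "i < length e"
  shows "F_eq (exps_word 0 (take i e @ Suc (e ! i) # 0 # drop (Suc i) e)) (exps_word 0 e @ [(i, True)])"
proof -
  let ?pre = "exps_word 0 (take i e) @ replicate (e ! i) (i, True)"
  have "min (length e) i = i" using assms by simp
  then have "exps_word 0 (take i e @ Suc (e ! i) # 0 # drop (Suc i) e) =
      ?pre @ (i, True) # exps_word (Suc (Suc i)) (drop (Suc i) e)"
    by (simp add: exps_word_append replicate_append_same[symmetric])
  also have "F_eq \<dots> (?pre @ exps_word (Suc i) (drop (Suc i) e) @ [(i, True)])"
    using F_eq_append_left[OF F_eq.F_sym[OF F_eq_pull_exps_word[of i "Suc i"]], of ?pre] by simp
  also have "?pre @ exps_word (Suc i) (drop (Suc i) e) @ [(i, True)] = exps_word 0 e @ [(i, True)]"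
    using id_take_nth_drop[OF assms] \<open>min (length e) i = i\<close>
    by (metis append.assoc append_Cons exps_word.simps(2) exps_word_append length_take add_0)
  finally show ?thesis .
qed

lemma tree_word_add_caret: "i < nodes T \<Longrightarrow> F_eq (tree_word (add_caret i T)) (tree_word T @ [(i, True)])"
  using F_eq_exps_word_add_caret[of i "leaf_exps T"]
  by (simp add: tree_word_def leaf_exps_add_caret length_leaf_exps)

lemma tree_word_add_caret_last: "tree_word (add_caret (nodes T) T) = tree_word T"
  by (simp add: tree_word_def leaf_exps_add_caret_last exps_word_append)

lemma pair_word_add_caret:
  assumes "nodes A = nodes B" and "i \<le> nodes A"
  shows "F_eq (pair_word (add_caret i A) (add_caret i B)) (pair_word A B)"
proof (cases "i < nodes A")
  case False
  then show ?thesis using assms tree_word_add_caret_last[of A] tree_word_add_caret_last[of B]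
    by (simp add: F_eq.F_refl)
next
  case True
  have "F_eq (pair_word (add_caret i A) (add_caret i B))
      ((tree_word B @ [(i, True)]) @ word_inv (tree_word A @ [(i, True)]))"
    using True assms(1) by (intro F_eq_append F_eq_word_inv tree_word_add_caret) simp_all
  also have "\<dots> = tree_word B @ (i, True) # letter_inv (i, True) # word_inv (tree_word A)"
    by simp
  also have "F_eq \<dots> (pair_word A B)"
    by (rule F_eq_append_left[OF F_eq_cancel])
  finally show ?thesis .
qed

fun add_caret_sub :: "nat \<Rightarrow> nat \<times> tree \<Rightarrow> nat \<times> tree" where
  "add_caret_sub i (a, t) =
     (if i < a then (Suc a, t) else if i < a + leaves t then (a, add_caret (i - a) t) else (a, t))"

fun remove_caret_sub :: "nat \<Rightarrow> nat \<times> tree \<Rightarrow> nat \<times> tree" where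
  "remove_caret_sub i (a, t) =
     (if i < a then (a - 1, t) else if i < a + leaves t then (a, remove_caret (i - a) t) else (a, t))"

lemma inj_add_caret_sub: "inj (add_caret_sub i)"
proof (rule inj_on_inverseI)
  fix x
  show "remove_caret_sub i (add_caret_sub i x) = x"
    by (cases x) (auto simp: leaves_add_caret remove_add_caret)
qed

lemma add_caret_sub_image_shift_ge:
  "k \<le> i \<Longrightarrow> add_caret_sub i ` shift_sub k ` X = shift_sub k ` add_caret_sub (i - k) ` X"
proof -
  assume "k \<le> i"
  then have "add_caret_sub i (shift_sub k x) = shift_sub k (add_caret_sub (i - k) x)" for x
    by (cases x) (auto simp: add.commute)
  then show ?thesis by (simp add: image_image)
qed

lemma add_caret_sub_image_shift_lt:
  "i < k \<Longrightarrow> add_caret_sub i ` shift_sub k ` X = shift_sub (Suc k) ` X"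
proof -
  assume "i < k"
  then have "add_caret_sub i (shift_sub k x) = shift_sub (Suc k) x" for x
    by (cases x) auto
  then show ?thesis by (simp add: image_image)
qed

lemma add_caret_sub_image_left:
  "(\<And>a t. (a, t) \<in> X \<Longrightarrow> a + leaves t \<le> i) \<Longrightarrow> add_caret_sub i ` X = X"
proof -
  assume "\<And>a t. (a, t) \<in> X \<Longrightarrow> a + leaves t \<le> i"
  then have "add_caret_sub i x = x" if "x \<in> X" for x
    using that by (cases x) fastforce
  then show ?thesis by simp
qed

abbreviation caret :: tree where
  "caret \<equiv> Node Leaf Leaf"

lemma subtrees_add_caret:
  "i < leaves t \<Longrightarrow> subtrees (add_caret i t) = add_caret_sub i ` subtrees t \<union> {(i, caret)}"
proof (induction i t rule: add_caret.induct)
  case (1 i)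
  then show ?case by simp
next
  case (2 i l r)
  have image_Node: "add_caret_sub i ` subtrees (Node l r) = insert (0, add_caret i (Node l r))
      (add_caret_sub i ` subtrees l \<union> add_caret_sub i ` shift_sub (leaves l) ` subtrees r)"
    using 2(3) by (simp add: image_Un)
  show ?case
  proof (cases "i < leaves l")
    case True
    then show ?thesis
      using 2(1) image_Node add_caret_sub_image_shift_lt[OF True] leaves_add_caret[OF True] by auto
  next
    case False
    have "subtrees (add_caret (i - leaves l) r) =
        add_caret_sub (i - leaves l) ` subtrees r \<union> {(i - leaves l, caret)}"
      using 2(2) 2(3) False by simp
    moreover have "add_caret_sub i ` subtrees l = subtrees l"
      using False by (intro add_caret_sub_image_left) (auto dest: subtrees_leaves_le)
    ultimately show ?thesis
      using image_Node add_caret_sub_image_shift_ge[of "leaves l" i] False by (auto simp: image_Un)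
  qed
qed

lemma off_arm_nodes_add_caret:
  "i \<le> nodes T \<Longrightarrow> off_arm_nodes (add_caret i T) =
     add_caret_sub i ` off_arm_nodes T \<union> (if i < nodes T then {(i, caret)} else {})"
proof (induction T arbitrary: i)
  case Leaf
  then show ?case by simp
next
  case (Node L R)
  show ?case
  proof (cases "i < leaves L")
    case True
    then have "i < nodes (Node L R)"
      using leaves_eq_Suc_nodes[of L] by simp
    then show ?thesis
      using True subtrees_add_caret[OF True] add_caret_sub_image_shift_lt[OF True]
        leaves_add_caret[OF True] by (auto simp: image_Un)
  next
    case False
    have "i - leaves L \<le> nodes R" "i - leaves L < nodes R \<longleftrightarrow> i < nodes (Node L R)"
      using Node.prems False leaves_eq_Suc_nodes[of L] by auto
    moreover have "add_caret_sub i ` subtrees L = subtrees L"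
      using False by (intro add_caret_sub_image_left) (auto dest: subtrees_leaves_le)
    ultimately show ?thesis
      using Node.IH(2) add_caret_sub_image_shift_ge[of "leaves L" i] False by (auto simp: image_Un)
  qed
qed

lemma caret_notin_add_caret_sub_image: "(i, caret) \<notin> add_caret_sub i ` off_arm_nodes T"
proof
  assume "(i, caret) \<in> add_caret_sub i ` off_arm_nodes T"
  then obtain a t where at: "(a, t) \<in> off_arm_nodes T" "add_caret_sub i (a, t) = (i, caret)"
    by auto
  then have "a = i" "add_caret 0 t = caret" "t \<noteq> Leaf"
    using off_arm_nodes_not_Leaf by (auto split: if_splits)
  then show False
    by (cases t) (auto simp: leaves_pos add_caret_not_Leaf split: if_splits)
qed

lemma off_arm_dist_add_caret:
  assumes "nodes A = nodes B" and "i \<le> nodes A"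
  shows "off_arm_dist (add_caret i A) (add_caret i B) = off_arm_dist A B"
proof -
  define C where "C = (if i < nodes A then {(i, caret)} else {})"
  have A: "off_arm_nodes (add_caret i A) = add_caret_sub i ` off_arm_nodes A \<union> C"
    and B: "off_arm_nodes (add_caret i B) = add_caret_sub i ` off_arm_nodes B \<union> C"
    using off_arm_nodes_add_caret assms by (simp_all add: C_def)
  have diff: "(add_caret_sub i ` X \<union> C) - (add_caret_sub i ` Y \<union> C) = add_caret_sub i ` (X - Y)"
    if "C \<inter> add_caret_sub i ` X = {}" for X Y
    using that by (auto simp: image_set_diff[OF inj_add_caret_sub])
  have disj: "C \<inter> add_caret_sub i ` off_arm_nodes T = {}" for T
    using caret_notin_add_caret_sub_image by (auto simp: C_def)
  show ?thesis
    unfolding off_arm_dist_def A B diff[OF disj]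
    by (simp add: card_image inj_on_subset[OF inj_add_caret_sub])
qed

section \<open>A faithful action on infinite binary sequences\<close>

fun gen_act :: "nat \<Rightarrow> bool stream \<Rightarrow> bool stream" where
  "gen_act 0 (True ## s) = True ## True ## s"
| "gen_act 0 (False ## True ## s) = True ## False ## s"
| "gen_act 0 (False ## False ## s) = False ## s"
| "gen_act (Suc k) (True ## s) = True ## gen_act k s"
| "gen_act (Suc k) (False ## s) = False ## s"

fun gen_inv_act :: "nat \<Rightarrow> bool stream \<Rightarrow> bool stream" where
  "gen_inv_act 0 (True ## True ## s) = True ## s"
| "gen_inv_act 0 (True ## False ## s) = False ## True ## s"
| "gen_inv_act 0 (False ## s) = False ## False ## s"
| "gen_inv_act (Suc k) (True ## s) = True ## gen_inv_act k s"
| "gen_inv_act (Suc k) (False ## s) = False ## s"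

lemma gen_inv_act_gen_act [simp]: "gen_inv_act k (gen_act k s) = s"
  by (induction k s rule: gen_act.induct) auto

lemma gen_act_gen_inv_act [simp]: "gen_act k (gen_inv_act k s) = s"
  by (induction k s rule: gen_inv_act.induct) auto

lemma gen_act_relation: "i < n \<Longrightarrow> gen_act i (gen_act n s) = gen_act (Suc n) (gen_act i s)"
  by (induction i s arbitrary: n rule: gen_act.induct) (auto simp: gr0_conv_Suc Suc_less_eq2)

definition letter_act :: "letter \<Rightarrow> bool stream \<Rightarrow> bool stream" where
  "letter_act l = (if snd l then gen_act (fst l) else gen_inv_act (fst l))"

lemma fold_letter_act_F_eq: "F_eq u v \<Longrightarrow> fold letter_act u = fold letter_act v"
proof (induction rule: F_eq.induct)
  case (F_free u i b v)
  have "letter_act (i, \<not> b) (letter_act (i, b) s) = s" for s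
    by (cases b) (auto simp: letter_act_def)
  then show ?case by simp
next
  case (F_rel i n u v)
  then have "fold letter_act (relator i n) = id"
    by (simp add: relator_def letter_act_def fun_eq_iff gen_act_relation)
  then show ?case by simp
qed auto

lemma inj_fold_letter_act: "inj (fold letter_act u)"
proof (rule inj_on_inverseI)
  fix s
  show "fold letter_act (word_inv u) (fold letter_act u s) = s"
    using fold_letter_act_F_eq[OF F_eq_word_inv_right[of u]] by (simp add: fun_eq_iff)
qed

lemma shift_right_cancel:
  fixes xs ys :: "bool list"
  assumes "\<And>w. xs @- w = ys @- w"
  shows "xs = ys"
proof -
  have not_shorter: "\<not> length p < length q" if "\<And>w. p @- w = q @- w" for p q :: "bool list"
  proof
    assume "length p < length q"
    have "(p @- w) !! length p = (q @- w) !! length p" for w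
      using that by simp
    with \<open>length p < length q\<close> have "shd w = q ! length p" for w
      by simp
    from this[of "(\<not> q ! length p) ## sconst True"] show False
      by simp
  qed
  then have "length xs = length ys"
    using assms by (metis linorder_neqE_nat)
  then show ?thesis
    using arg_cong[OF assms[of "sconst True"], of "stake (length xs)"] by (simp add: stake_shift)
qed

fun leaf_addrs :: "tree \<Rightarrow> bool list list" where
  "leaf_addrs Leaf = [[]]"
| "leaf_addrs (Node l r) = map (Cons False) (leaf_addrs l) @ map (Cons True) (leaf_addrs r)"

lemma length_leaf_addrs: "length (leaf_addrs t) = leaves t"
  by (induction t) auto

lemma leaf_addrs_inj: "leaf_addrs t = leaf_addrs s \<Longrightarrow> t = s"
proof (induction t arbitrary: s)
  case Leaf
  then show ?case by (cases s) (auto simp: Cons_eq_append_conv)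
next
  case (Node l r)
  then obtain l' r' where s: "s = Node l' r'"
    by (cases s) (auto simp: append_eq_Cons_conv)
  have "leaf_addrs l = map tl (filter (\<lambda>p. \<not> hd p) (leaf_addrs (Node l r)))"
    and "leaf_addrs r = map tl (filter hd (leaf_addrs (Node l r)))" for l r
    by (simp_all add: filter_map comp_def)
  then show ?case using Node s by metis
qed

lemma leaf_addrs_rrot:
  "rrot k T T' \<Longrightarrow> i < leaves T \<Longrightarrow> gen_act k (leaf_addrs T ! i @- w) = leaf_addrs T' ! i @- w"
proof (induction arbitrary: i rule: rrot.induct)
  case (rrot_root A B C)
  consider "i < leaves A" | "leaves A \<le> i" "i < leaves A + leaves B" | "leaves A + leaves B \<le> i"
    by linarith
  then show ?case
  proof cases
    case 1
    then show ?thesis by (simp add: nth_append length_leaf_addrs)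
  next
    case 2
    then show ?thesis by (simp add: nth_append length_leaf_addrs)
  next
    case 3
    then have "i - (leaves A + leaves B) < leaves C"
      using rrot_root.prems by simp
    with 3 show ?thesis by (simp add: nth_append length_leaf_addrs diff_diff_add)
  qed
next
  case (rrot_right k t t' L)
  show ?case
  proof (cases "i < leaves L")
    case True
    then show ?thesis by (simp add: nth_append length_leaf_addrs)
  next
    case False
    then have "i - leaves L < leaves t" using rrot_right.prems by simp
    then show ?thesis
      using False rrot_right.IH leaves_rrot[OF rrot_right.hyps]
      by (simp add: nth_append length_leaf_addrs)
  qed
qed

fun vine :: "nat \<Rightarrow> tree" where
  "vine 0 = Leaf"
| "vine (Suc n) = Node Leaf (vine n)"

fun arm_length :: "tree \<Rightarrow> nat" where
  "arm_length Leaf = 0"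
| "arm_length (Node l r) = Suc (arm_length r)"

lemma arm_length_le_nodes: "arm_length t \<le> nodes t"
  by (induction t) auto

lemma arm_length_rrot: "rrot k T T' \<Longrightarrow> arm_length T' = Suc (arm_length T)"
  by (induction rule: rrot.induct) auto

lemma vine_or_rrot: "T = vine (nodes T) \<or> (\<exists>k T'. rrot k T T')"
proof (induction T)
  case Leaf
  then show ?case by simp
next
  case (Node L R)
  then show ?case
    by (cases L) (auto intro: rrot.intros)
qed

lemma tree_word_vine: "tree_word (vine n) = []"
proof -
  have "leaf_exps (vine n) = replicate (Suc n) 0"
    by (induction n) auto
  moreover have "exps_word k (replicate m 0) = []" for k m
    by (induction m arbitrary: k) auto
  ultimately show ?thesis by (simp add: tree_word_def)
qed

lemma fold_letter_act_tree_word: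
  "i < leaves T \<Longrightarrow>
    fold letter_act (tree_word T) (leaf_addrs T ! i @- w) = leaf_addrs (vine (nodes T)) ! i @- w"
proof (induction "nodes T - arm_length T" arbitrary: T rule: less_induct)
  case less
  from vine_or_rrot[of T] show ?case
  proof
    assume "T = vine (nodes T)"
    then show ?thesis by (metis tree_word_vine fold_Nil id_apply)
  next
    assume "\<exists>k T'. rrot k T T'"
    then obtain k T' where T': "rrot k T T'" by blast
    have "fold letter_act (tree_word T) (leaf_addrs T ! i @- w) =
        fold letter_act (tree_word T') (gen_act k (leaf_addrs T ! i @- w))"
      using fold_letter_act_F_eq[OF tree_word_rrot[OF T']] by (simp add: letter_act_def)
    also have "\<dots> = fold letter_act (tree_word T') (leaf_addrs T' ! i @- w)"
      using leaf_addrs_rrot[OF T' less.prems] by simp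
    also have "\<dots> = leaf_addrs (vine (nodes T')) ! i @- w"
      using less.hyps nodes_rrot[OF T'] arm_length_rrot[OF T'] arm_length_le_nodes[of T']
        leaves_rrot[OF T'] less.prems by simp
    finally show ?thesis using nodes_rrot[OF T'] by simp
  qed
qed

lemma eq_if_pair_word_trivial:
  assumes "nodes A = nodes B" and "F_eq [] (pair_word A B)"
  shows "A = B"
proof -
  have "F_eq (tree_word A) ([] @ tree_word A)"
    by (simp add: F_eq.F_refl)
  also have "F_eq \<dots> (pair_word A B @ tree_word A)"
    by (rule F_eq_append_right[OF assms(2)])
  also have "F_eq \<dots> (tree_word B @ [])"
    using F_eq_append_left[OF F_eq_word_inv_left, of "tree_word B" "tree_word A"] by simp
  finally have act: "fold letter_act (tree_word A) = fold letter_act (tree_word B)"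
    by (simp add: fold_letter_act_F_eq)
  have "leaf_addrs A ! i = leaf_addrs B ! i" if "i < leaves A" for i
  proof (rule shift_right_cancel)
    fix w
    have "fold letter_act (tree_word A) (leaf_addrs A ! i @- w) =
        fold letter_act (tree_word A) (leaf_addrs B ! i @- w)"
      using fold_letter_act_tree_word[of i A w] fold_letter_act_tree_word[of i B w] that assms(1)
      by (simp add: act leaves_eq_Suc_nodes)
    then show "leaf_addrs A ! i @- w = leaf_addrs B ! i @- w"
      using inj_fold_letter_act by (simp add: inj_eq)
  qed
  then have "leaf_addrs A = leaf_addrs B"
    using assms(1) by (intro nth_equalityI) (simp_all add: length_leaf_addrs leaves_eq_Suc_nodes)
  then show ?thesis by (rule leaf_addrs_inj)
qed

section \<open>Word length bounds the off-arm distance\<close>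

inductive caret_expansion :: "tree \<Rightarrow> tree \<Rightarrow> tree \<Rightarrow> tree \<Rightarrow> bool" where
  expansion_refl: "caret_expansion A B A B"
| expansion_add_caret:
    "caret_expansion A B A' B' \<Longrightarrow> i \<le> nodes A' \<Longrightarrow>
      caret_expansion A B (add_caret i A') (add_caret i B')"

lemma caret_expansion_invariants:
  "caret_expansion A B A' B' \<Longrightarrow> nodes A = nodes B \<Longrightarrow>
    nodes A' = nodes B' \<and> off_arm_dist A' B' = off_arm_dist A B \<and>
    F_eq (pair_word A' B') (pair_word A B)"
proof (induction rule: caret_expansion.induct)
  case (expansion_refl A B)
  then show ?case by (simp add: F_eq.F_refl)
next
  case (expansion_add_caret A B A' B' i)
  then have IH: "nodes A' = nodes B'" "off_arm_dist A' B' = off_arm_dist A B"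
      "F_eq (pair_word A' B') (pair_word A B)"
    by auto
  have "i < leaves A'" "i < leaves B'"
    using expansion_add_caret.hyps(2) IH(1) by (simp_all add: leaves_eq_Suc_nodes)
  then have "nodes (add_caret i A') = nodes (add_caret i B')"
    using IH(1) by (simp add: nodes_add_caret)
  moreover have "off_arm_dist (add_caret i A') (add_caret i B') = off_arm_dist A B"
    using off_arm_dist_add_caret[OF IH(1) expansion_add_caret.hyps(2)] IH(2) by simp
  moreover have "F_eq (pair_word (add_caret i A') (add_caret i B')) (pair_word A B)"
    using pair_word_add_caret[OF IH(1) expansion_add_caret.hyps(2)] IH(3) by (rule F_eq.F_trans)
  ultimately show ?case by blast
qed

lemma arm_length_add_caret_last: "arm_length (add_caret (nodes t) t) = Suc (arm_length t)"
proof (induction t)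
  case Leaf
  then show ?case by simp
next
  case (Node l r)
  have "\<not> nodes (Node l r) < leaves l" "nodes (Node l r) - leaves l = nodes r"
    using leaves_eq_Suc_nodes[of l] by simp_all
  with Node.IH(2) show ?case by simp
qed

lemma caret_expansion_long_arm:
  "nodes A = nodes B \<Longrightarrow> \<exists>A' B'. caret_expansion A B A' B' \<and> m \<le> arm_length B'"
proof (induction m)
  case 0
  then show ?case using expansion_refl by blast
next
  case (Suc m)
  then obtain A' B' where exp: "caret_expansion A B A' B'" and "m \<le> arm_length B'"
    by blast
  moreover have "nodes A' = nodes B'"
    using caret_expansion_invariants[OF exp Suc.prems] by simp
  ultimately have "caret_expansion A B (add_caret (nodes B') A') (add_caret (nodes B') B')"
    and "Suc m \<le> arm_length (add_caret (nodes B') B')"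
    using expansion_add_caret[OF exp, of "nodes B'"] arm_length_add_caret_last[of B'] by auto
  then show ?case by blast
qed

lemma rrot_after_add_caret: "k < arm_length B \<Longrightarrow> \<exists>i \<le> nodes B. \<exists>B'. rrot k (add_caret i B) B'"
proof (induction k arbitrary: B)
  case 0
  then obtain L R where B: "B = Node L R"
    by (cases B) auto
  obtain X Y where "add_caret 0 L = Node X Y"
    using add_caret_not_Leaf[OF leaves_pos[of L]] by (cases "add_caret 0 L") auto
  then have "rrot 0 (add_caret 0 B) (Node X (Node Y R))"
    using B leaves_pos[of L] by (simp add: rrot_root)
  then show ?case by blast
next
  case (Suc k)
  then obtain L R where B: "B = Node L R" and "k < arm_length R"
    by (cases B) auto
  then obtain i R' where "i \<le> nodes R" "rrot k (add_caret i R) R'"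
    using Suc.IH by blast
  then have "rrot (Suc k) (add_caret (leaves L + i) B) (Node L R')"
    and "leaves L + i \<le> nodes B"
    using B leaves_eq_Suc_nodes[of L] by (simp_all add: rrot_right)
  then show ?case by blast
qed

lemma rrot_onto: "Suc k < arm_length B \<Longrightarrow> \<exists>B'. rrot k B' B"
proof (induction k arbitrary: B)
  case 0
  then obtain L M R where "B = Node L (Node M R)"
    by (metis arm_length.elims less_Suc0 not_less_zero)
  then show ?case using rrot_root by blast
next
  case (Suc k)
  then obtain L R where "B = Node L R" and "Suc k < arm_length R"
    by (cases B) auto
  then show ?case using Suc.IH rrot_right by blast
qed

lemma nodes_ra_step: "ra_step T T' \<Longrightarrow> nodes T' = nodes T"
  by (auto simp: ra_step_iff_rrot dest: nodes_rrot)

lemma off_arm_dist_ra_step: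
  assumes "ra_step B B'"
  shows "off_arm_dist A B \<le> Suc (off_arm_dist A B')"
proof -
  have step: "off_arm_dist A T \<le> Suc (off_arm_dist A T') \<and>
      off_arm_dist A T' \<le> Suc (off_arm_dist A T)"
    if rot: "rrot k T T'" for k T T'
  proof -
    obtain x where "x \<in> off_arm_nodes T" "off_arm_nodes T' = off_arm_nodes T - {x}"
      using off_arm_nodes_rrot[OF rot] by blast
    from off_arm_dist_remove[OF this, of A] show ?thesis
      by (simp split: if_splits)
  qed
  from assms show ?thesis
    by (auto simp: ra_step_iff_rrot dest: step)
qed

lemma caret_expansion_absorbs_letter:
  assumes "nodes A = nodes B"
  obtains A' B' B'' where "caret_expansion A B A' B'" and "ra_step B' B''"
    and "F_eq (pair_word A' B') ((k, b) # pair_word A' B'')"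
proof -
  obtain A1 B1 where exp: "caret_expansion A B A1 B1" and arm: "Suc (Suc k) \<le> arm_length B1"
    using caret_expansion_long_arm[OF assms] by blast
  have nodes: "nodes A1 = nodes B1"
    using caret_expansion_invariants[OF exp assms] by simp
  show ?thesis
  proof (cases b)
    case True
    obtain i B'' where "i \<le> nodes B1" and rot: "rrot k (add_caret i B1) B''"
      using rrot_after_add_caret[of k B1] arm by auto
    then have "caret_expansion A B (add_caret i A1) (add_caret i B1)"
      using expansion_add_caret[OF exp] nodes by simp
    moreover have "ra_step (add_caret i B1) B''"
      using rot ra_step_iff_rrot by blast
    moreover have "F_eq (pair_word (add_caret i A1) (add_caret i B1))
        ((k, b) # pair_word (add_caret i A1) B'')"
      using F_eq_append_right[OF tree_word_rrot[OF rot]] True by simp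
    ultimately show ?thesis by (rule that)
  next
    case False
    obtain B'' where rot: "rrot k B'' B1"
      using rrot_onto[of k B1] arm by auto
    then have "ra_step B1 B''"
      using ra_step_iff_rrot by blast
    moreover have "F_eq (pair_word A1 B1) ((k, b) # pair_word A1 B'')"
      using F_eq_append_right[OF F_eq.F_sym[OF F_eq_move_Cons[OF tree_word_rrot[OF rot]]]] False
      by (simp add: letter_inv_def)
    ultimately show ?thesis using exp by (rule that[rotated])
  qed
qed

lemma off_arm_dist_le_length:
  "nodes A = nodes B \<Longrightarrow> F_eq u (pair_word A B) \<Longrightarrow> off_arm_dist A B \<le> length u"
proof (induction u arbitrary: A B)
  case Nil
  then have "A = B"
    using eq_if_pair_word_trivial by blast
  then show ?case by (simp add: off_arm_dist_def)
next
  case (Cons l u)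
  obtain A' B' B'' where exp: "caret_expansion A B A' B'" and step: "ra_step B' B''"
    and absorb: "F_eq (pair_word A' B') (l # pair_word A' B'')"
    using caret_expansion_absorbs_letter[OF Cons.prems(1), of "fst l" "snd l"] by auto
  have inv: "nodes A' = nodes B'" "off_arm_dist A' B' = off_arm_dist A B"
      "F_eq (pair_word A' B') (pair_word A B)"
    using caret_expansion_invariants[OF exp Cons.prems(1)] by auto
  have "F_eq (l # u) (l # pair_word A' B'')"
    using Cons.prems(2) F_eq.F_trans[OF F_eq.F_sym[OF inv(3)] absorb] by (rule F_eq.F_trans)
  then have "F_eq u (pair_word A' B'')"
    by (rule F_eq_Cons_cancel)
  moreover have "nodes A' = nodes B''"
    using inv(1) nodes_ra_step[OF step] by simp
  ultimately have "off_arm_dist A' B'' \<le> length u"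
    using Cons.IH by blast
  then show ?case
    using off_arm_dist_ra_step[OF step, of A'] inv(2) by simp
qed

theorem proposition3p7:
  fixes T1 T2 :: tree and n :: nat
  assumes "nodes T1 = n" and "nodes T2 = n"
  shows "d_RA T1 T2 = F_length (tp_word T1 T2)"
proof -
  have nodes: "nodes T1 = nodes T2"
    using assms by simp
  have word: "tp_word T1 T2 = pair_word T1 T2"
    using tp_word_eq_pair_word[OF nodes] .
  obtain m where m: "m \<le> off_arm_dist T1 T2" "(ra_step ^^ m) T1 T2"
    using ra_path_off_arm_dist[OF nodes] by blast
  then have path: "(ra_step ^^ d_RA T1 T2) T1 T2" and "d_RA T1 T2 \<le> off_arm_dist T1 T2"
    unfolding d_RA_def by (auto intro: LeastI Least_le[THEN order_trans])
  obtain u where "length u = d_RA T1 T2" "F_eq u (tp_word T1 T2)"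
    using ra_path_word[OF path] word by auto
  then have "F_length (tp_word T1 T2) \<le> d_RA T1 T2"
    unfolding F_length_def by (blast intro: Least_le)
  moreover have "\<exists>v. F_eq v (tp_word T1 T2) \<and> length v = F_length (tp_word T1 T2)"
    unfolding F_length_def by (rule LeastI_ex) (blast intro: F_eq.F_refl)
  then have "off_arm_dist T1 T2 \<le> F_length (tp_word T1 T2)"
    using off_arm_dist_le_length[OF nodes] word by metis
  ultimately show ?thesis
    using \<open>d_RA T1 T2 \<le> off_arm_dist T1 T2\<close> by simp
qed

end
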